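(* Consider an instance of the submodular partition problem (notation in context) with $m\ge 2$ users, and let $G=\{(u_1,r_1),\dots,(u_n,r_n)\}$ be the output of the GREEDY-M algorithm, where $(u_i,r_i)$ is the pair chosen at iteration $i$, $d_i^p$ the discriminant at iteration $i$ and $c_{u_i}$ the curvature of $Z_{u_i}$. Let $\Omega$ be an optimal partition and assume $Z(\Omega)>0$. Then $$\frac{Z(G)}{Z(\Omega)}\ \ge\ \min\left(1,\ \frac{1}{\max_{1\le i\le n}\left\{c_{u_i}+\frac{1}{d_i^p}\right\}}\right),$$ with the conventions $1/\infty=0$, $1/0=\infty$.
   Context: Submodular partition problem: a finite set of resources $\mathcal{R}$ with $|\mathcal{R}|=n$ and a finite set of users $\mathcal{U}$ with $|\mathcal{U}|=m$; each user $u$ has a monotone submodular $Z_u:2^{\mathcal{R}}\to\mathbb{R}$ with $Z_u(\emptyset)=0$ (monotone: $Z_u(S)\le Z_u(T)$ for $S\subseteq T$; submodular: $Z_u(T\cup\{x\})-Z_u(T)\le Z_u(S\cup\{x\})-Z_u(S)$ for $S\subseteq T$, $x\notin T$). Let $\mathcal{V}=\mathcal{U}\times\mathcal{R}$; for $S\subseteq\mathcal{V}$ let $S_u=\{r:(u,r)\in S\}$ and $Z(S)=\sum_{u\in\mathcal{U}}Z_u(S_u)$. An allocation is $S\subseteq \mathcal{V}$ in which each resource appears in at most one pair; a partition is an allocation in which every resource appears in exactly one pair. $\Omega$ is a partition maximizing $Z$. For $S\subseteq\mathcal{V}$, $\rho^u_r(S)=Z_u(S_u\cup\{r\})-Z_u(S_u)$.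 The curvature of $Z_u$ is $c_u=1-\min\{(Z_u(S\cup\{r\})-Z_u(S))/Z_u(\{r\}): S\subseteq\mathcal{R},\ r\in\mathcal{R}\setminus S,\ Z_u(\{r\})>0\}$. GREEDY-M algorithm: $G^0=\emptyset$; for $i=1,\dots,n$, among pairs $(u,r)$ with $r$ not allocated in $G^{i-1}$, select a pair maximizing $\rho^u_r(G^{i-1})$; if several pairs attain the maximum, select among them one minimizing $c_u+1/d_i(u,r)$, where $d_i(u,r)=\rho^u_r(G^{i-1})/\max_{u'\neq u}\rho^{u'}_r(G^{i-1})$ (set to $\infty$ if the denominator is $0$); remaining ties are broken by a fixed index order of pairs. Call the selected pair $(u_i,r_i)$ and set $G^i=G^{i-1}\cup\{(u_i,r_i)\}$; output $G=G^n$. The discriminant at iteration $i$ is $d_i^p=d_i(u_i,r_i)$. *)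

theory Defs
  imports Main "HOL-Library.Extended_Real"
begin

definition sec :: "('u \<times> 'r) set \<Rightarrow> 'u \<Rightarrow> 'r set" where
  "sec S u = {r. (u, r) \<in> S}"

definition Ztot :: "'u set \<Rightarrow> ('u \<Rightarrow> 'r set \<Rightarrow> real) \<Rightarrow> ('u \<times> 'r) set \<Rightarrow> real" where
  "Ztot U Z S = (\<Sum>u\<in>U. Z u (sec S u))"

definition rho :: "('u \<Rightarrow> 'r set \<Rightarrow> real) \<Rightarrow> ('u \<times> 'r) set \<Rightarrow> 'u \<Rightarrow> 'r \<Rightarrow> real" where
  "rho Z S u r = Z u (sec S u \<union> {r}) - Z u (sec S u)"

definition monotone_fn :: "'r set \<Rightarrow> ('r set \<Rightarrow> real) \<Rightarrow> bool" where
  "monotone_fn R f \<longleftrightarrow> (\<forall>S T. S \<subseteq> T \<and> T \<subseteq> R \<longrightarrow> f S \<le> f T)"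

definition submodular_fn :: "'r set \<Rightarrow> ('r set \<Rightarrow> real) \<Rightarrow> bool" where
  "submodular_fn R f \<longleftrightarrow> (\<forall>S T x. S \<subseteq> T \<and> T \<subseteq> R \<and> x \<in> R \<and> x \<notin> T \<longrightarrow>
      f (T \<union> {x}) - f T \<le> f (S \<union> {x}) - f S)"

definition is_partition :: "'u set \<Rightarrow> 'r set \<Rightarrow> ('u \<times> 'r) set \<Rightarrow> bool" where
  "is_partition U R S \<longleftrightarrow> S \<subseteq> U \<times> R \<and> (\<forall>r\<in>R. \<exists>!u. (u, r) \<in> S)"

definition allocated :: "('u \<times> 'r) set \<Rightarrow> 'r set" where
  "allocated S = snd ` S"

(* curvature; convention: 0 if Z_u({r}) = 0 for all r (then Z_u is identically 0) *)
definition curvature :: "'r set \<Rightarrow> ('r set \<Rightarrow> real) \<Rightarrow> real" where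
  "curvature R f =
     (let Q = {(f (S \<union> {r}) - f S) / f {r} | S r. S \<subseteq> R \<and> r \<in> R \<and> r \<notin> S \<and> f {r} > 0}
      in if Q = {} then 0 else 1 - Min Q)"

definition discr :: "'u set \<Rightarrow> ('u \<Rightarrow> 'r set \<Rightarrow> real) \<Rightarrow> ('u \<times> 'r) set \<Rightarrow> 'u \<Rightarrow> 'r \<Rightarrow> ereal" where
  "discr U Z S u r =
     (let den = Max {rho Z S u' r | u'. u' \<in> U \<and> u' \<noteq> u}
      in if den = 0 then \<infinity> else ereal (rho Z S u r / den))"

(* secondary key c_u + 1/d (with 1/\<infinity> = 0, 1/0 = \<infinity>, as ereal inverse does) *)
definition tiekey :: "'u set \<Rightarrow> 'r set \<Rightarrow> ('u \<Rightarrow> 'r set \<Rightarrow> real) \<Rightarrow> ('u \<times> 'r) set \<Rightarrow> 'u \<Rightarrow> 'r \<Rightarrow> ereal" where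
  "tiekey U R Z S u r = ereal (curvature R (Z u)) + inverse (discr U Z S u r)"

definition greedy_choice ::
  "'u set \<Rightarrow> 'r set \<Rightarrow> ('u \<Rightarrow> 'r set \<Rightarrow> real) \<Rightarrow> ('u \<times> 'r \<Rightarrow> nat) \<Rightarrow> ('u \<times> 'r) set \<Rightarrow> 'u \<times> 'r \<Rightarrow> bool" where
  "greedy_choice U R Z idx S p \<longleftrightarrow>
     (case p of (u, r) \<Rightarrow>
        u \<in> U \<and> r \<in> R \<and> r \<notin> allocated S \<and>
        (\<forall>u'\<in>U. \<forall>r'\<in>R. r' \<notin> allocated S \<longrightarrow>
           rho Z S u' r' \<le> rho Z S u r \<and>
           (rho Z S u' r' = rho Z S u r \<longrightarrow>
              tiekey U R Z S u r \<le> tiekey U R Z S u' r' \<and>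
              (tiekey U R Z S u' r' = tiekey U R Z S u r \<longrightarrow> idx (u, r) \<le> idx (u', r')))))"

definition Gpre :: "(nat \<Rightarrow> 'u \<times> 'r) \<Rightarrow> nat \<Rightarrow> ('u \<times> 'r) set" where
  "Gpre p k = p ` {1..k}"

end

theory Submission
  imports Defs
begin

text \<open>Let \<open>K\<close> be the largest tie-breaking key \<open>c\<^sub>u\<^sub>i + 1/d\<^sub>i\<^sup>p\<close> along the run. Walk from any
  partition \<open>\<Omega>\<close> to the greedy output through the hybrids \<open>G\<^sup>i \<union> {(v,r) \<in> \<Omega>. r unallocated in G\<^sup>i}\<close>.
  Step \<open>i\<close> replaces the \<open>\<Omega>\<close>-owner \<open>v\<close> of \<open>r\<^sub>i\<close> by \<open>u\<^sub>i\<close>: by submodularity \<open>v\<close> loses at most its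
  marginal at \<open>G\<^sup>i\<^sup>-\<^sup>1\<close>, which is bounded by the runner-up gain \<open>\<rho>\<^sub>i/d\<^sub>i\<^sup>p\<close>, while by curvature \<open>u\<^sub>i\<close> gains
  at least \<open>(1 - c\<^sub>u\<^sub>i) \<rho>\<^sub>i\<close>, where \<open>\<rho>\<^sub>i\<close> is the greedy gain. So each step costs at most \<open>(K - 1) \<rho>\<^sub>i\<close>,
  and summing, \<open>Z(\<Omega>) \<le> max 1 K \<cdot> Z(G)\<close>.\<close>

lemma sec_insert: "sec (insert (u, r) B) w = (if w = u then sec B u \<union> {r} else sec B w)"
  by (auto simp: sec_def)

lemma Ztot_insert:
  assumes "finite U" "u \<in> U"
  shows "Ztot U Z (insert (u, r) B) = Ztot U Z B + rho Z B u r"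
proof -
  have "Ztot U Z (insert (u, r) B) = Z u (sec B u \<union> {r}) + (\<Sum>w\<in>U-{u}. Z w (sec B w))"
    unfolding Ztot_def using assms by (simp add: sum.remove sec_insert)
  moreover have "Ztot U Z B = Z u (sec B u) + (\<Sum>w\<in>U-{u}. Z w (sec B w))"
    unfolding Ztot_def using assms by (simp add: sum.remove)
  ultimately show ?thesis by (simp add: rho_def)
qed

lemma marginal_nonneg:
  assumes "monotone_fn R f" "S \<subseteq> R" "r \<in> R"
  shows "0 \<le> f (S \<union> {r}) - f S"
proof -
  have "S \<subseteq> S \<union> {r}" "S \<union> {r} \<subseteq> R" using assms(2,3) by auto
  then show ?thesis using assms(1) unfolding monotone_fn_def by auto
qed

lemma rho_nonneg:
  "monotone_fn R (Z w) \<Longrightarrow> S \<subseteq> U \<times> R \<Longrightarrow> r \<in> R \<Longrightarrow> 0 \<le> rho Z S w r"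
  unfolding rho_def by (rule marginal_nonneg) (auto simp: sec_def)

lemma marginal_le_singleton:
  assumes "submodular_fn R f" "f {} = 0" "S \<subseteq> R" "r \<in> R" "r \<notin> S"
  shows "f (S \<union> {r}) - f S \<le> f {r}"
  using assms unfolding submodular_fn_def by (metis Un_empty_left diff_zero empty_subsetI)

lemma curvature_ratios_finite:
  "finite R \<Longrightarrow> finite {(f (S \<union> {r}) - f S) / f {r} | S r. S \<subseteq> R \<and> r \<in> R \<and> r \<notin> S \<and> f {r} > 0}"
  by (rule finite_subset[of _ "(\<lambda>(S, r). (f (S \<union> {r}) - f S) / f {r}) ` (Pow R \<times> R)"]) auto

lemma curvature_le_1:
  assumes "finite R" "monotone_fn R f"
  shows "curvature R f \<le> 1"
proof -
  define Q where "Q = {(f (S \<union> {r}) - f S) / f {r} | S r. S \<subseteq> R \<and> r \<in> R \<and> r \<notin> S \<and> f {r} > 0}"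
  have "0 \<le> Min Q" if "Q \<noteq> {}"
  proof -
    have "finite Q" unfolding Q_def by (rule curvature_ratios_finite[OF assms(1)])
    moreover have "0 \<le> q" if "q \<in> Q" for q
      using that marginal_nonneg[OF assms(2)] unfolding Q_def by fastforce
    ultimately show ?thesis using Min_in \<open>Q \<noteq> {}\<close> by blast
  qed
  then show ?thesis unfolding curvature_def Q_def[symmetric] Let_def by auto
qed

lemma marginal_ge_curvature:
  assumes "finite R" "monotone_fn R f" "f {} = 0" "S \<subseteq> R" "r \<in> R" "r \<notin> S"
  shows "(1 - curvature R f) * f {r} \<le> f (S \<union> {r}) - f S"
proof (cases "f {r} > 0")
  case True
  define Q where "Q = {(f (S \<union> {r}) - f S) / f {r} | S r. S \<subseteq> R \<and> r \<in> R \<and> r \<notin> S \<and> f {r} > 0}"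
  have ratio: "(f (S \<union> {r}) - f S) / f {r} \<in> Q"
    unfolding Q_def using assms True by blast
  then have "curvature R f = 1 - Min Q"
    unfolding curvature_def Q_def[symmetric] Let_def by auto
  moreover have "Min Q \<le> (f (S \<union> {r}) - f S) / f {r}"
    using curvature_ratios_finite[OF assms(1), of f] ratio unfolding Q_def[symmetric] by simp
  ultimately show ?thesis using True by (simp add: pos_le_divide_eq)
next
  case False
  have "f {} \<le> f {r}" using marginal_nonneg[OF assms(2), of "{}" r] assms(5) by simp
  then have "f {r} = 0" using False assms(3) by simp
  then show ?thesis using marginal_nonneg[OF assms(2,4,5)] by simp
qed

definition rival_gain :: "'u set \<Rightarrow> ('u \<Rightarrow> 'r set \<Rightarrow> real) \<Rightarrow> ('u \<times> 'r) set \<Rightarrow> 'u \<Rightarrow> 'r \<Rightarrow> real" where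
  "rival_gain U Z S u r = Max {rho Z S u' r | u'. u' \<in> U \<and> u' \<noteq> u}"

lemma rival_gain_eq_Max_image:
  "rival_gain U Z S u r = Max ((\<lambda>u'. rho Z S u' r) ` (U - {u}))"
proof -
  have "{rho Z S u' r | u'. u' \<in> U \<and> u' \<noteq> u} = (\<lambda>u'. rho Z S u' r) ` (U - {u})"
    by blast
  then show ?thesis by (simp only: rival_gain_def)
qed

lemma rival_gain_attained:
  assumes "finite U" "card U \<ge> 2"
  obtains v where "v \<in> U" "v \<noteq> u" "rival_gain U Z S u r = rho Z S v r"
proof -
  have "U - {u} \<noteq> {}"
    using assms card_mono[of "{u}" U] by force
  then have "rival_gain U Z S u r \<in> (\<lambda>u'. rho Z S u' r) ` (U - {u})"
    unfolding rival_gain_eq_Max_image using assms(1) by (intro Max_in) auto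
  then show ?thesis using that by blast
qed

lemma rival_gain_ge:
  "finite U \<Longrightarrow> v \<in> U \<Longrightarrow> v \<noteq> u \<Longrightarrow> rho Z S v r \<le> rival_gain U Z S u r"
  unfolding rival_gain_eq_Max_image by (intro Max_ge) auto

text \<open>With \<open>x / 0 = 0\<close>, the real number below is the key \<open>c\<^sub>u + 1/d\<close> also when \<open>d = \<infinity>\<close>.\<close>

lemma tiekey_eq:
  assumes "0 \<le> rival_gain U Z S u r" "rival_gain U Z S u r \<le> rho Z S u r"
  shows "tiekey U R Z S u r = ereal (curvature R (Z u) + rival_gain U Z S u r / rho Z S u r)"
proof -
  have discr: "discr U Z S u r = (if rival_gain U Z S u r = 0 then \<infinity>
      else ereal (rho Z S u r / rival_gain U Z S u r))"
    unfolding discr_def rival_gain_def Let_def by (rule refl)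
  show ?thesis
  proof (cases "rival_gain U Z S u r = 0")
    case False
    then have "rho Z S u r / rival_gain U Z S u r \<noteq> 0" using assms by auto
    then show ?thesis using False unfolding tiekey_def discr by simp
  qed (simp add: tiekey_def discr)
qed

subsection \<open>Exchanging the owner of one resource\<close>

lemma swap_loss_le:
  assumes "finite R" "monotone_fn R (Z u)" "Z u {} = 0" "submodular_fn R (Z u)"
    and "submodular_fn R (Z v)"
    and "G \<subseteq> B" "B \<subseteq> U \<times> R" "r \<in> R" "r \<notin> sec B u" "r \<notin> sec B v"
    and "rho Z G v r \<le> D" "0 \<le> D" "D \<le> rho Z G u r"
  shows "rho Z B v r - rho Z B u r \<le> (curvature R (Z u) + D / rho Z G u r - 1) * rho Z G u r"
proof -
  have GR: "sec G u \<subseteq> R" "sec G v \<subseteq> sec B v" and BR: "sec B u \<subseteq> R" "sec B v \<subseteq> R"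
    using assms(6,7) by (auto simp: sec_def)
  have "rho Z B v r \<le> rho Z G v r"
    using assms(5) GR(2) BR(2) assms(8,10) unfolding submodular_fn_def rho_def by blast
  with assms(11) have loss: "rho Z B v r \<le> D" by linarith
  have "rho Z G u r \<le> Z u {r}"
    unfolding rho_def using marginal_le_singleton[OF assms(4,3) GR(1) assms(8)] assms(6,9)
    by (auto simp: sec_def)
  then have "(1 - curvature R (Z u)) * rho Z G u r \<le> (1 - curvature R (Z u)) * Z u {r}"
    using curvature_le_1[OF assms(1,2)] by (simp add: mult_left_mono)
  also have "\<dots> \<le> rho Z B u r"
    unfolding rho_def by (rule marginal_ge_curvature[OF assms(1-3) BR(1) assms(8,9)])
  finally have gain: "(1 - curvature R (Z u)) * rho Z G u r \<le> rho Z B u r" .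
  have "rho Z B v r \<le> D / rho Z G u r * rho Z G u r"
    using loss assms(12,13) by (cases "rho Z G u r = 0") auto
  moreover have "(curvature R (Z u) + D / rho Z G u r - 1) * rho Z G u r
      = D / rho Z G u r * rho Z G u r - (1 - curvature R (Z u)) * rho Z G u r"
    by (simp add: algebra_simps)
  ultimately show ?thesis using gain by linarith
qed

definition hybrid :: "('u \<times> 'r) set \<Rightarrow> ('u \<times> 'r) set \<Rightarrow> ('u \<times> 'r) set" where
  "hybrid \<Omega> S = S \<union> {x \<in> \<Omega>. snd x \<notin> allocated S}"

lemma partition_owner:
  assumes "is_partition U R \<Omega>" "r \<in> R"
  obtains v where "v \<in> U" "{x \<in> \<Omega>. snd x = r} = {(v, r)}"
proof -
  obtain v where v: "(v, r) \<in> \<Omega>" and owner: "\<forall>w. (w, r) \<in> \<Omega> \<longrightarrow> w = v"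
    using assms unfolding is_partition_def by blast
  have "{x \<in> \<Omega>. snd x = r} = {(v, r)}"
  proof (intro equalityI subsetI)
    fix x assume "x \<in> {x \<in> \<Omega>. snd x = r}"
    then have "(fst x, r) \<in> \<Omega>" "snd x = r" by auto
    then show "x \<in> {(v, r)}" using owner prod.collapse[of x] by (metis singletonI)
  qed (use v in simp)
  moreover have "v \<in> U" using v assms(1) unfolding is_partition_def by blast
  ultimately show ?thesis using that by blast
qed

lemma hybrid_exchange:
  assumes "{x \<in> \<Omega>. snd x = r} = {(v, r)}" "r \<notin> allocated G"
  defines "B \<equiv> G \<union> {x \<in> \<Omega>. snd x \<notin> insert r (allocated G)}"
  shows "hybrid \<Omega> G = insert (v, r) B" "hybrid \<Omega> (insert (u, r) G) = insert (u, r) B"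
    "r \<notin> sec B w"
proof -
  have "{x \<in> \<Omega>. snd x \<notin> allocated G}
      = {x \<in> \<Omega>. snd x = r} \<union> {x \<in> \<Omega>. snd x \<notin> insert r (allocated G)}"
    using assms(2) by auto
  then show "hybrid \<Omega> G = insert (v, r) B"
    unfolding B_def hybrid_def assms(1) by simp
  show "hybrid \<Omega> (insert (u, r) G) = insert (u, r) B"
    unfolding B_def hybrid_def allocated_def by auto
  show "r \<notin> sec B w"
    using assms(2) unfolding B_def sec_def allocated_def by force
qed

subsection \<open>A run of GREEDY-M\<close>

lemma Gpre_0 [simp]: "Gpre p 0 = {}"
  by (simp add: Gpre_def)

lemma Gpre_Suc: "Gpre p (Suc i) = insert (p (Suc i)) (Gpre p i)"
  unfolding Gpre_def by (simp add: atLeastAtMostSuc_conv)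

lemma greedy_choiceD:
  assumes "greedy_choice U R Z idx S (u, r)"
  shows "u \<in> U" "r \<in> R" "r \<notin> allocated S" "\<And>u'. u' \<in> U \<Longrightarrow> rho Z S u' r \<le> rho Z S u r"
  using assms unfolding greedy_choice_def by auto

locale greedy_m_run =
  fixes U :: "'u set" and R :: "'r set" and Z :: "'u \<Rightarrow> 'r set \<Rightarrow> real"
    and idx :: "'u \<times> 'r \<Rightarrow> nat" and p :: "nat \<Rightarrow> 'u \<times> 'r"
  assumes finite_users: "finite U" and finite_resources: "finite R" and two_users: "card U \<ge> 2"
    and monotone: "u \<in> U \<Longrightarrow> monotone_fn R (Z u)"
    and submodular: "u \<in> U \<Longrightarrow> submodular_fn R (Z u)"
    and normalized: "u \<in> U \<Longrightarrow> Z u {} = 0"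
    and greedy: "i \<in> {1..card R} \<Longrightarrow> greedy_choice U R Z idx (Gpre p (i - 1)) (p i)"
begin

definition gain :: "nat \<Rightarrow> real" where
  "gain i = rho Z (Gpre p (i - 1)) (fst (p i)) (snd (p i))"

definition rival :: "nat \<Rightarrow> real" where
  "rival i = rival_gain U Z (Gpre p (i - 1)) (fst (p i)) (snd (p i))"

definition key :: "nat \<Rightarrow> real" where
  "key i = curvature R (Z (fst (p i))) + rival i / gain i"

lemma greedy_pick:
  assumes "i \<in> {1..card R}"
  shows "p i \<in> U \<times> R" "snd (p i) \<notin> allocated (Gpre p (i - 1))"
    "\<And>u'. u' \<in> U \<Longrightarrow> rho Z (Gpre p (i - 1)) u' (snd (p i)) \<le> gain i"
  using greedy_choiceD[of U R Z idx _ "fst (p i)" "snd (p i)"] greedy[OF assms]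
  unfolding gain_def by (simp_all add: mem_Times_iff)

lemma Gpre_subset: "i \<le> card R \<Longrightarrow> Gpre p i \<subseteq> U \<times> R"
  using greedy_pick(1) unfolding Gpre_def by fastforce

lemma allocated_Gpre_all: "allocated (Gpre p (card R)) = R"
proof (rule card_subset_eq[OF finite_resources])
  show "allocated (Gpre p (card R)) \<subseteq> R"
    using Gpre_subset[of "card R"] by (auto simp: allocated_def)
  have "inj_on (snd \<circ> p) {1..card R}"
  proof (rule linorder_inj_onI')
    fix i j assume "i \<in> {1..card R}" "j \<in> {1..card R}" "i < j"
    then have "p i \<in> Gpre p (j - 1)" by (auto simp: Gpre_def)
    then show "(snd \<circ> p) i \<noteq> (snd \<circ> p) j"
      using greedy_pick(2)[OF \<open>j \<in> _\<close>] unfolding allocated_def by (metis comp_apply image_eqI)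
  qed
  moreover have "allocated (Gpre p (card R)) = (snd \<circ> p) ` {1..card R}"
    by (auto simp: allocated_def Gpre_def)
  ultimately show "card (allocated (Gpre p (card R))) = card R"
    by (metis card_image card_atLeastAtMost diff_Suc_1)
qed

lemma rival_bounds:
  assumes "i \<in> {1..card R}"
  shows "0 \<le> rival i" "rival i \<le> gain i"
proof -
  obtain v where v: "v \<in> U" "rival i = rho Z (Gpre p (i - 1)) v (snd (p i))"
    using rival_gain_attained[OF finite_users two_users] unfolding rival_def by metis
  show "rival i \<le> gain i" using greedy_pick(3)[OF assms v(1)] v(2) by simp
  show "0 \<le> rival i"
    using v rho_nonneg[OF monotone Gpre_subset] greedy_pick(1)[OF assms] assms by auto
qed

lemma tiekey_greedy:
  "i \<in> {1..card R} \<Longrightarrow> tiekey U R Z (Gpre p (i - 1)) (fst (p i)) (snd (p i)) = ereal (key i)"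
  using tiekey_eq rival_bounds unfolding key_def rival_def gain_def by metis

lemma Ztot_Gpre_Suc:
  "Suc i \<le> card R \<Longrightarrow> Ztot U Z (Gpre p (Suc i)) = Ztot U Z (Gpre p i) + gain (Suc i)"
  using Ztot_insert[OF finite_users] greedy_pick(1)[of "Suc i"]
  unfolding Gpre_Suc gain_def by (cases "p (Suc i)") auto

lemma Max_tiekey_greedy:
  assumes "R \<noteq> {}"
  shows "Max {tiekey U R Z (Gpre p (i - 1)) (fst (p i)) (snd (p i)) | i. i \<in> {1..card R}}
    = ereal (Max (key ` {1..card R}))"
proof -
  have "{tiekey U R Z (Gpre p (i - 1)) (fst (p i)) (snd (p i)) | i. i \<in> {1..card R}}
      = ereal ` key ` {1..card R}"
    using tiekey_greedy by (force simp: image_image)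
  moreover have "Max (ereal ` key ` {1..card R}) = ereal (Max (key ` {1..card R}))"
    using assms finite_resources
    by (intro mono_Max_commute[symmetric]) (auto simp: mono_def card_gt_0_iff Suc_le_eq)
  ultimately show ?thesis by simp
qed

context
  fixes \<Omega> :: "('u \<times> 'r) set"
  assumes partition: "is_partition U R \<Omega>"
begin

lemma hybrid_step_loss:
  assumes "Suc i \<le> card R"
  shows "Ztot U Z (hybrid \<Omega> (Gpre p i)) - Ztot U Z (hybrid \<Omega> (Gpre p (Suc i)))
    \<le> max 0 (key (Suc i) - 1) * gain (Suc i)"
proof -
  obtain u r where pi: "p (Suc i) = (u, r)" by fastforce
  have j: "Suc i \<in> {1..card R}" using assms by simp
  have u: "u \<in> U" and r: "r \<in> R" "r \<notin> allocated (Gpre p i)"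
    using greedy_pick(1,2)[OF j] pi by auto
  obtain v where vU: "v \<in> U" and owner: "{x \<in> \<Omega>. snd x = r} = {(v, r)}"
    using partition_owner[OF partition r(1)] .
  define B where "B = Gpre p i \<union> {x \<in> \<Omega>. snd x \<notin> insert r (allocated (Gpre p i))}"
  have before: "hybrid \<Omega> (Gpre p i) = insert (v, r) B"
    and after: "hybrid \<Omega> (Gpre p (Suc i)) = insert (u, r) B"
    and rB: "\<And>w. r \<notin> sec B w"
    using hybrid_exchange[OF owner r(2)] unfolding B_def Gpre_Suc pi by blast+
  have GB: "Gpre p i \<subseteq> B" unfolding B_def by blast
  have BUR: "B \<subseteq> U \<times> R"
    unfolding B_def using Gpre_subset[of i] assms partition by (auto simp: is_partition_def)
  have diff: "Ztot U Z (hybrid \<Omega> (Gpre p i)) - Ztot U Z (hybrid \<Omega> (Gpre p (Suc i)))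
      = rho Z B v r - rho Z B u r"
    unfolding before after Ztot_insert[OF finite_users u] Ztot_insert[OF finite_users vU] by simp
  have "0 \<le> gain (Suc i)"
    using rival_bounds[OF j] by linarith
  show ?thesis
  proof (cases "u = v")
    case False
    have "rho Z (Gpre p i) v r \<le> rival (Suc i)"
      using rival_gain_ge[OF finite_users vU] False unfolding rival_def pi by force
    then have "rho Z B v r - rho Z B u r \<le> (key (Suc i) - 1) * gain (Suc i)"
      using swap_loss_le[OF finite_resources monotone[OF u] normalized[OF u] submodular[OF u]
          submodular[OF vU] GB BUR r(1) rB rB] rival_bounds[OF j] pi
      unfolding key_def gain_def by (simp add: algebra_simps)
    also have "\<dots> \<le> max 0 (key (Suc i) - 1) * gain (Suc i)"
      using \<open>0 \<le> gain (Suc i)\<close> by (intro mult_right_mono) auto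
    finally show ?thesis unfolding diff .
  qed (use \<open>0 \<le> gain (Suc i)\<close> diff in simp)
qed

lemma partition_loss_le:
  assumes "i \<le> card R"
  shows "Ztot U Z \<Omega> - Ztot U Z (hybrid \<Omega> (Gpre p i))
    \<le> max 0 (Max (key ` {1..card R}) - 1) * Ztot U Z (Gpre p i)"
  using assms
proof (induction i)
  case 0
  then show ?case by (simp add: hybrid_def allocated_def Ztot_def sec_def normalized)
next
  case (Suc i)
  have "key (Suc i) \<le> Max (key ` {1..card R})"
    using Suc.prems by (intro Max_ge) auto
  moreover have "0 \<le> gain (Suc i)"
    using rival_bounds[of "Suc i"] Suc.prems by fastforce
  ultimately have "max 0 (key (Suc i) - 1) * gain (Suc i)
      \<le> max 0 (Max (key ` {1..card R}) - 1) * gain (Suc i)"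
    by (intro mult_right_mono) auto
  with Suc hybrid_step_loss[OF Suc.prems] show ?case
    by (simp add: Ztot_Gpre_Suc algebra_simps)
qed

lemma partition_le_greedy:
  "Ztot U Z \<Omega> \<le> max 1 (Max (key ` {1..card R})) * Ztot U Z (Gpre p (card R))"
proof -
  have "hybrid \<Omega> (Gpre p (card R)) = Gpre p (card R)"
    using partition allocated_Gpre_all unfolding hybrid_def is_partition_def by auto
  then show ?thesis
    using partition_loss_le[of "card R"] by (simp add: max_def algebra_simps split: if_splits)
qed

end

end

lemma min_1_inverse_le_ratio:
  fixes a b K :: real
  assumes "0 < b" "b \<le> max 1 K * a"
  shows "min 1 (inverse (ereal K)) \<le> ereal (a / b)"
proof (cases "K \<le> 1")
  case True
  then have "1 \<le> a / b" using assms by simp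
  then show ?thesis by (simp add: min.coboundedI1)
next
  case False
  then have "1 / K \<le> a / b" using assms by (simp add: field_simps)
  then show ?thesis using False by (simp add: min.coboundedI2 inverse_eq_divide)
qed

theorem theorem4:
  fixes U :: "'u set" and R :: "'r set" and Z :: "'u \<Rightarrow> 'r set \<Rightarrow> real"
    and idx :: "'u \<times> 'r \<Rightarrow> nat" and p :: "nat \<Rightarrow> 'u \<times> 'r"
    and \<Omega> :: "('u \<times> 'r) set"
  assumes "finite U" and "finite R" and "card U \<ge> 2"
    and "\<forall>u\<in>U. monotone_fn R (Z u) \<and> submodular_fn R (Z u) \<and> Z u {} = 0"
    and "inj_on idx (U \<times> R)"
    and "\<forall>i\<in>{1..card R}. greedy_choice U R Z idx (Gpre p (i - 1)) (p i)"
    and "is_partition U R \<Omega>"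
    and "\<forall>S. is_partition U R S \<longrightarrow> Ztot U Z S \<le> Ztot U Z \<Omega>"
    and "Ztot U Z \<Omega> > 0"
  shows "ereal (Ztot U Z (Gpre p (card R)) / Ztot U Z \<Omega>)
           \<ge> min 1 (inverse (Max {tiekey U R Z (Gpre p (i - 1)) (fst (p i)) (snd (p i)) | i. i \<in> {1..card R}}))"
proof -
  interpret greedy_m_run U R Z idx p
    using assms(1-4,6) by unfold_locales auto
  have "R \<noteq> {}"
  proof
    assume "R = {}"
    then have "\<Omega> = {}" using assms(7) unfolding is_partition_def by auto
    then show False using assms(9) normalized by (simp add: Ztot_def sec_def)
  qed
  then show ?thesis
    unfolding Max_tiekey_greedy[OF \<open>R \<noteq> {}\<close>]
    using min_1_inverse_le_ratio[OF assms(9) partition_le_greedy[OF assms(7)]] by simp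
qed

end
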